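(* Let $\vec q\subseteq\mathrm{qVars}$, let $Q$ be an orthogonal projection on $\mathcal H_{\vec q}$, and $Q^\perp=I-Q$. (a) (H.boostRep) For any $p\in(0,1)$ and $\varepsilon\in(0,p)$, $$\{pI,\;I\}\,\square\,\{Q_{\vec q},\;I\}\ \hookrightarrow_{\mathrm{tot}}^{*}\ \mathbf{repeat}\ \lceil\log_{1-\varepsilon}(1-p)\rceil\ \mathbf{do}\ \big(\mathbf{if}\ Q^\perp[\vec q]\ \mathbf{then}\ \{\varepsilon Q^\perp_{\vec q},\;Q^\perp_{\vec q}\}\,\square\,\{Q_{\vec q},\;I\}\big).$$ (b) (H.boostWhile) For any $\varepsilon\in(0,1)$, $$\{I\}\,\square\,\{Q_{\vec q}\}\ \hookrightarrow_{\mathrm{tot}}^{*}\ \mathbf{while}\ Q^\perp[\vec q]\ \mathbf{do}\ \{\varepsilon Q^\perp_{\vec q},\;Q^\perp_{\vec q}\}\,\square\,\{Q_{\vec q},\;I\}.$$ Here $\{P,P'\}\square\{Q,Q'\}$ denotes a single hole carrying the two specifications $(P,Q)$ and $(P',Q')$.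
   Context: Quantum setting. There is a finite set $\mathrm{qVars}$ of quantum variables; each $q$ has Hilbert space $\mathcal H_q=\mathbb C^{\Sigma_q}$ ($\Sigma_q$ finite) with standard orthonormal basis $\{|x\rangle\}_{x\in\Sigma_q}$. For a set $\vec q\subseteq\mathrm{qVars}$, $\mathcal H_{\vec q}=\bigotimes_{q\in\vec q}\mathcal H_q$ with standard basis labelled by $\Sigma_{\vec q}=\prod_{q\in\vec q}\Sigma_q$, and $\mathcal H=\mathcal H_{\mathrm{qVars}}$. For an operator $A$ on $\mathcal H_{\vec q}$, $A_{\vec q}=A\otimes I$ on $\mathcal H$. $\preceq$ is the Löwner order. A partial state is a positive semidefinite (PSD) $\rho$ on $\mathcal H$ with $\operatorname{tr}\rho\le1$. A predicate is an operator $P$ on $\mathcal H$ with $0\preceq P\preceq I$; "$P\Rightarrow Q$" means $P\preceq Q$. A measurement on $\vec q$ is a family $\vec M=\{M_\omega\}_{\omega\in\Omega}$ ($\Omega$ finite) of PSD operators on $\mathcal H_{\vec q}$ with $\sum_\omega M_\omega=I$; write $\mathcal M_{\omega}(X)=\sqrt{M_{\omega,\vec q}}\,X\,\sqrt{M_{\omega,\vec q}}$. A binary measurement is given by an operator $B$ on $\mathcal H_{\vec q}$ with $0\preceq B\preceq I$, and $\mathcal B_{0,\vec q}(X)=\sqrt{(I-B)_{\vec q}}\,X\sqrt{(I-B)_{\vec q}}$, $\mathcal B_{1,\vec q}(X)=\sqrt{B_{\vec q}}\,X\sqrt{B_{\vec q}}$. Quantum while language: $S::=\mathbf{skip}\mid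 \vec q:=|0\rangle\mid \vec q\mathrel{*}=U\mid S_1;S_2\mid \mathbf{repeat}\ N\ \mathbf{do}\ S\mid \mathbf{case}\ \vec M[\vec q]\ \mathbf{of}\ \{\omega: S_\omega\}_{\omega\in\Omega}\mid \mathbf{while}\ B[\vec q]\ \mathbf{do}\ S$, with $U$ unitary on $\mathcal H_{\vec q}$, $N\in\mathbb N$. Denotational semantics $[\![S]\!]$ on partial states: $[\![\mathbf{skip}]\!](\rho)=\rho$; $[\![\vec q:=|0\rangle]\!](\rho)=\sum_{x\in\Sigma_{\vec q}}|0\rangle\langle x|_{\vec q}\,\rho\,|x\rangle\langle0|_{\vec q}$; $[\![\vec q\mathrel{*}=U]\!](\rho)=U_{\vec q}\rho U_{\vec q}^\dagger$; $[\![S_1;S_2]\!]=[\![S_2]\!]\circ[\![S_1]\!]$; $[\![\mathbf{repeat}\ N\ \mathbf{do}\ S]\!]=[\![S]\!]^N$; $[\![\mathbf{case}\ldots]\!](\rho)=\sum_\omega[\![S_\omega]\!](\mathcal M_\omega(\rho))$; $[\![\mathbf{while}\ B[\vec q]\ \mathbf{do}\ S]\!](\rho)=\sum_{k\ge0}(\mathcal B_{0,\vec q}\circ([\![S]\!]\circ\mathcal B_{1,\vec q})^k)(\rho)$. Hoare triples: $\models_{\mathrm{tot}}\{P\}S\{Q\}$ iff $\operatorname{tr}(P\rho)\le\operatorname{tr}(Q[\![S]\!](\rho))$ for all partial states $\rho$; $\models_{\mathrm{par}}\{P\}S\{Q\}$ iff $\operatorname{tr}(P\rho)\le\operatorname{tr}(Q[\![S]\!](\rho))+\operatorname{tr}\rho-\operatorname{tr}[\![S]\!](\rho)$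 for all partial states $\rho$. Syntactic sugar: $\mathbf{if}\ B[\vec q]\ \mathbf{then}\ S_1\ \mathbf{else}\ S_0$ abbreviates $\mathbf{case}\ \{1:B,0:I-B\}[\vec q]\ \mathbf{of}\ \{1:S_1,0:S_0\}$; omitting else means $S_0=\mathbf{skip}$. Programs with holes. The grammar is extended by holes $\{P\}\,\square\,\{Q\}$ ($P,Q$ predicates); more generally a hole may carry a family of specifications $\{P_\lambda\}\,\square\,\{Q_\lambda\}$, $\lambda\in\Lambda$ (written e.g. $\{P,P'\}\square\{Q,Q'\}$ for two). A program without holes is concrete. A refinement rule applied to a hole with a family must have its side conditions satisfied for every $\lambda$; the predicates it introduces may depend on $\lambda$, but the syntactic program produced (variables, unitaries, measurements, $N$, $B$) is the same for all $\lambda$; holes it creates carry the families indexed by $\lambda$ together with any newly introduced index. Refinement for partial correctness $\hookrightarrow_{\mathrm{par}}$ (for predicates $P,Q$): (H.skip) $\{P\}\square\{Q\}\hookrightarrow\mathbf{skip}$ if $P\Rightarrow Q$; (H.init) $\{P\}\square\{Q\}\hookrightarrow\vec q:=|0\rangle$ if $P\Rightarrow\sum_{x\in\Sigma_{\vec q}}|x\rangle\langle0|_{\vec q}Q|0\rangle\langle x|_{\vec q}$; (H.unit) $\{P\}\square\{Q\}\hookrightarrow\vec q\mathrel{*}=U$ if $P\Rightarrow U_{\vec q}^\dagger QU_{\vec q}$; (H.seq) $\{P\}\square\{Q\}\hookrightarrow\{P\}\square\{R\};\{R\}\square\{Q\}$ for any predicate $R$; (HP.split) $\{P\}\square\{Q\}\hookrightarrow\{P_\gamma\}\square\{Q_\gamma\}$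 ($\gamma\in\Gamma$) if $P\Rightarrow\sum_\gamma p_\gamma P_\gamma$ and $\sum_\gamma p_\gamma Q_\gamma\Rightarrow Q$ for a probability distribution $(p_\gamma)$; (H.repeat) $\{P\}\square\{Q\}\hookrightarrow\mathbf{repeat}\ N\ \mathbf{do}\ \{R_j\}\square\{R_{j+1}\}$ (family over $j\in\{0,\dots,N-1\}$) for predicates $R_0,\dots,R_N$ with $P\Rightarrow R_0$, $R_N\Rightarrow Q$; (H.case) $\{P\}\square\{Q\}\hookrightarrow\mathbf{case}\ \vec M[\vec q]\ \mathbf{of}\ \{\omega:\{P_\omega\}\square\{Q\}\}_{\omega}$ if $P\Rightarrow\sum_\omega\mathcal M_\omega(P_\omega)$; (HP.while) $\{P\}\square\{Q\}\hookrightarrow\mathbf{while}\ B[\vec q]\ \mathbf{do}\ \{R\}\square\{\mathcal B_{0,\vec q}(Q)+\mathcal B_{1,\vec q}(R)\}$ for a predicate $R$ with $P\Rightarrow\mathcal B_{0,\vec q}(Q)+\mathcal B_{1,\vec q}(R)$. Composite rules: (C.seqL/C.seqR/C.repeat/C.case/C.while) if $S'\hookrightarrow S$ then replacing one occurrence of $S'$ as the left or right component of a sequence, the body of a repeat, one branch of a case, or the body of a while by $S$ is a refinement step. Refinement for total correctness $\hookrightarrow_{\mathrm{tot}}$ uses all (H.* ) and (C.* ) rules above but replaces (HP.while) by (HT.while): $\{P\}\square\{Q\}\hookrightarrow\mathbf{while}\ B[\vec q]\ \mathbf{do}\ \{R_{n+1}\}\square\{\mathcal B_{0,\vec q}(Q)+\mathcal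 B_{1,\vec q}(R_n)\}$ (family over $n\in\mathbb N$) for predicates $(R_n)_{n\in\mathbb N}$ with $R_0=0$, $R_n\Rightarrow R_{n+1}$, whose limit $R=\lim_n R_n$ satisfies $P\Rightarrow\mathcal B_{0,\vec q}(Q)+\mathcal B_{1,\vec q}(R)$; and replaces (HP.split) by (HT.split), identical except that $(p_\gamma)$ need only be nonnegative reals. $\hookrightarrow^k$ denotes $k$ steps and $\hookrightarrow^*$ the reflexive-transitive closure. *)

theory Defs
  imports "HOL-Analysis.Analysis"
begin

text \<open>An operator is represented by its matrix (kernel) with respect to the standard
basis. The standard basis of H_qs (qs a set of quantum variables, with alphabets
Sigma) is the set of assignments PiE qs Sigma; entries outside the basis are
irrelevant (all notions below only look at entries indexed by the basis).\<close>

type_synonym ('v,'a) op = "('v \<Rightarrow> 'a) \<Rightarrow> ('v \<Rightarrow> 'a) \<Rightarrow> complex"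

definition opadd :: "('v,'a) op \<Rightarrow> ('v,'a) op \<Rightarrow> ('v,'a) op" where
  "opadd A C = (\<lambda>x y. A x y + C x y)"

definition opsub :: "('v,'a) op \<Rightarrow> ('v,'a) op \<Rightarrow> ('v,'a) op" where
  "opsub A C = (\<lambda>x y. A x y - C x y)"

definition opscale :: "complex \<Rightarrow> ('v,'a) op \<Rightarrow> ('v,'a) op" where
  "opscale c A = (\<lambda>x y. c * A x y)"

definition opzero :: "('v,'a) op" where
  "opzero = (\<lambda>x y. 0)"

definition opsum :: "'i set \<Rightarrow> ('i \<Rightarrow> ('v,'a) op) \<Rightarrow> ('v,'a) op" where
  "opsum I f = (\<lambda>x y. \<Sum>i\<in>I. f i x y)"

definition mmult :: "('v \<Rightarrow> 'a) set \<Rightarrow> ('v,'a) op \<Rightarrow> ('v,'a) op \<Rightarrow> ('v,'a) op" where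
  "mmult B A C = (\<lambda>x y. \<Sum>z\<in>B. A x z * C z y)"

definition adj :: "('v,'a) op \<Rightarrow> ('v,'a) op" where
  "adj A = (\<lambda>x y. cnj (A y x))"

definition ident :: "('v \<Rightarrow> 'a) set \<Rightarrow> ('v,'a) op" where
  "ident B = (\<lambda>x y. if x \<in> B \<and> x = y then 1 else 0)"

definition eq_on :: "('v \<Rightarrow> 'a) set \<Rightarrow> ('v,'a) op \<Rightarrow> ('v,'a) op \<Rightarrow> bool" where
  "eq_on B A C \<longleftrightarrow> (\<forall>x\<in>B. \<forall>y\<in>B. A x y = C x y)"

definition psd :: "('v \<Rightarrow> 'a) set \<Rightarrow> ('v,'a) op \<Rightarrow> bool" where
  "psd B A \<longleftrightarrow> (\<forall>x\<in>B. \<forall>y\<in>B. A x y = cnj (A y x)) \<and>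
     (\<forall>\<psi> :: ('v \<Rightarrow> 'a) \<Rightarrow> complex.
        0 \<le> Re (\<Sum>x\<in>B. \<Sum>y\<in>B. cnj (\<psi> x) * A x y * \<psi> y))"

definition loewner :: "('v \<Rightarrow> 'a) set \<Rightarrow> ('v,'a) op \<Rightarrow> ('v,'a) op \<Rightarrow> bool" where
  "loewner B A C \<longleftrightarrow> psd B (opsub C A)"

definition op_sqrt :: "('v \<Rightarrow> 'a) set \<Rightarrow> ('v,'a) op \<Rightarrow> ('v,'a) op" where
  "op_sqrt B A = (THE S. psd B S \<and> (\<forall>x y. x \<notin> B \<or> y \<notin> B \<longrightarrow> S x y = 0)
                       \<and> eq_on B (mmult B S S) A)"

definition unitary_op :: "('v \<Rightarrow> 'a) set \<Rightarrow> ('v,'a) op \<Rightarrow> bool" where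
  "unitary_op B U \<longleftrightarrow> eq_on B (mmult B (adj U) U) (ident B) \<and> eq_on B (mmult B U (adj U)) (ident B)"

definition orth_proj :: "('v \<Rightarrow> 'a) set \<Rightarrow> ('v,'a) op \<Rightarrow> bool" where
  "orth_proj B P \<longleftrightarrow> eq_on B (adj P) P \<and> eq_on B (mmult B P P) P"

definition ketbra :: "('v \<Rightarrow> 'a) \<Rightarrow> ('v \<Rightarrow> 'a) \<Rightarrow> ('v,'a) op" where
  "ketbra a b = (\<lambda>u w. if u = a \<and> w = b then 1 else 0)"

text \<open>Quantum variables form the finite type 'v (qVars = UNIV); variable v has
alphabet Sigma v (finite, containing the distinguished label 0).\<close>

definition wf_alph :: "('v::finite \<Rightarrow> 'a::zero set) \<Rightarrow> bool" where
  "wf_alph \<Sigma> \<longleftrightarrow> (\<forall>v. finite (\<Sigma> v) \<and> 0 \<in> \<Sigma> v)"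

definition bas :: "('v \<Rightarrow> 'a set) \<Rightarrow> 'v set \<Rightarrow> ('v \<Rightarrow> 'a) set" where
  "bas \<Sigma> qs = PiE qs \<Sigma>"

abbreviation full :: "('v \<Rightarrow> 'a set) \<Rightarrow> ('v \<Rightarrow> 'a) set" where
  "full \<Sigma> \<equiv> bas \<Sigma> UNIV"

definition zero_st :: "'v set \<Rightarrow> ('v \<Rightarrow> 'a::zero)" where
  "zero_st qs = restrict (\<lambda>_. 0) qs"

text \<open>A_qs = A \<otimes> I on the full space H.\<close>
definition lift :: "('v \<Rightarrow> 'a set) \<Rightarrow> 'v set \<Rightarrow> ('v,'a) op \<Rightarrow> ('v,'a) op" where
  "lift \<Sigma> qs A = (\<lambda>x y. if x \<in> full \<Sigma> \<and> y \<in> full \<Sigma> \<and> (\<forall>v. v \<notin> qs \<longrightarrow> x v = y v)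
                         then A (restrict x qs) (restrict y qs) else 0)"

abbreviation Id_full :: "('v \<Rightarrow> 'a set) \<Rightarrow> ('v,'a) op" where
  "Id_full \<Sigma> \<equiv> ident (full \<Sigma>)"

definition predicate :: "('v \<Rightarrow> 'a set) \<Rightarrow> ('v,'a) op \<Rightarrow> bool" where
  "predicate \<Sigma> P \<longleftrightarrow> loewner (full \<Sigma>) opzero P \<and> loewner (full \<Sigma>) P (Id_full \<Sigma>)"

definition sandw :: "('v \<Rightarrow> 'a set) \<Rightarrow> 'v set \<Rightarrow> ('v,'a) op \<Rightarrow> ('v,'a) op \<Rightarrow> ('v,'a) op" where
  "sandw \<Sigma> qs A X = (let S = op_sqrt (full \<Sigma>) (lift \<Sigma> qs A)
                       in mmult (full \<Sigma>) (mmult (full \<Sigma>) S X) S)"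

definition B0 :: "('v \<Rightarrow> 'a set) \<Rightarrow> 'v set \<Rightarrow> ('v,'a) op \<Rightarrow> ('v,'a) op \<Rightarrow> ('v,'a) op" where
  "B0 \<Sigma> qs B X = sandw \<Sigma> qs (opsub (ident (bas \<Sigma> qs)) B) X"

definition B1 :: "('v \<Rightarrow> 'a set) \<Rightarrow> 'v set \<Rightarrow> ('v,'a) op \<Rightarrow> ('v,'a) op \<Rightarrow> ('v,'a) op" where
  "B1 \<Sigma> qs B X = sandw \<Sigma> qs B X"

definition measurement :: "('v \<Rightarrow> 'a set) \<Rightarrow> 'v set \<Rightarrow> ('v,'a) op list \<Rightarrow> bool" where
  "measurement \<Sigma> qs Ms \<longleftrightarrow> (\<forall>M\<in>set Ms. psd (bas \<Sigma> qs) M) \<and>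
     eq_on (bas \<Sigma> qs) (opsum {..<length Ms} (\<lambda>i. Ms ! i)) (ident (bas \<Sigma> qs))"

text \<open>A hole carries a set of specifications (pre, post). Case statements carry a list
of (measurement operator, branch) pairs; the outcome set Omega is the index set of the list.\<close>

datatype ('v,'a) prog =
    Skip
  | Init "'v set"
  | Unit "'v set" "('v,'a) op"
  | Seq "('v,'a) prog" "('v,'a) prog"
  | Repeat nat "('v,'a) prog"
  | Case "'v set" "(('v,'a) op \<times> ('v,'a) prog) list"
  | While "'v set" "('v,'a) op" "('v,'a) prog"
  | Hole "(('v,'a) op \<times> ('v,'a) op) set"

definition IfThenElse :: "('v \<Rightarrow> 'a set) \<Rightarrow> 'v set \<Rightarrow> ('v,'a) op \<Rightarrow> ('v,'a) prog \<Rightarrow> ('v,'a) prog \<Rightarrow> ('v,'a) prog" where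
  "IfThenElse \<Sigma> qs B S1 S0 = Case qs [(B, S1), (opsub (ident (bas \<Sigma> qs)) B, S0)]"

definition IfThen :: "('v \<Rightarrow> 'a set) \<Rightarrow> 'v set \<Rightarrow> ('v,'a) op \<Rightarrow> ('v,'a) prog \<Rightarrow> ('v,'a) prog" where
  "IfThen \<Sigma> qs B S1 = IfThenElse \<Sigma> qs B S1 Skip"

type_synonym ('v,'a) spec = "('v,'a) op \<times> ('v,'a) op"

text \<open>One application of an (H.*) rule (total-correctness version) to a hole carrying the
family of specifications F. Predicates introduced by a rule may depend on the specification
s = (P,Q) \<in> F; the produced program syntax does not.\<close>

definition hole_ref_tot :: "('v::finite \<Rightarrow> 'a::zero set) \<Rightarrow> ('v,'a) spec set \<Rightarrow> ('v,'a) prog \<Rightarrow> bool" where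
  "hole_ref_tot \<Sigma> F S \<longleftrightarrow>
    \<comment> \<open>H.skip\<close>
    (S = Skip \<and> (\<forall>(P,Q)\<in>F. loewner (full \<Sigma>) P Q))
  \<or> \<comment> \<open>H.init\<close>
    (\<exists>qs. S = Init qs \<and> (\<forall>(P,Q)\<in>F. loewner (full \<Sigma>) P
        (opsum (bas \<Sigma> qs) (\<lambda>x. mmult (full \<Sigma>) (mmult (full \<Sigma>)
             (lift \<Sigma> qs (ketbra x (zero_st qs))) Q) (lift \<Sigma> qs (ketbra (zero_st qs) x))))))
  \<or> \<comment> \<open>H.unit\<close>
    (\<exists>qs U. S = Unit qs U \<and> unitary_op (bas \<Sigma> qs) U \<and>
        (\<forall>(P,Q)\<in>F. loewner (full \<Sigma>) P
           (mmult (full \<Sigma>) (mmult (full \<Sigma>) (adj (lift \<Sigma> qs U)) Q) (lift \<Sigma> qs U))))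
  \<or> \<comment> \<open>H.seq\<close>
    (\<exists>R :: ('v,'a) spec \<Rightarrow> ('v,'a) op.
        (\<forall>s\<in>F. predicate \<Sigma> (R s)) \<and>
        S = Seq (Hole ((\<lambda>s. (fst s, R s)) ` F)) (Hole ((\<lambda>s. (R s, snd s)) ` F)))
  \<or> \<comment> \<open>HT.split (finite index set, nonnegative weights)\<close>
    (\<exists>(\<Gamma>::nat set) (p :: ('v,'a) spec \<Rightarrow> nat \<Rightarrow> real) (P' :: ('v,'a) spec \<Rightarrow> nat \<Rightarrow> ('v,'a) op)
        (Q' :: ('v,'a) spec \<Rightarrow> nat \<Rightarrow> ('v,'a) op).
        finite \<Gamma> \<and>
        (\<forall>s\<in>F. \<forall>g\<in>\<Gamma>. 0 \<le> p s g \<and> predicate \<Sigma> (P' s g) \<and> predicate \<Sigma> (Q' s g)) \<and>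
        (\<forall>s\<in>F. loewner (full \<Sigma>) (fst s) (opsum \<Gamma> (\<lambda>g. opscale (complex_of_real (p s g)) (P' s g)))) \<and>
        (\<forall>s\<in>F. loewner (full \<Sigma>) (opsum \<Gamma> (\<lambda>g. opscale (complex_of_real (p s g)) (Q' s g))) (snd s)) \<and>
        S = Hole {(P' s g, Q' s g) | s g. s \<in> F \<and> g \<in> \<Gamma>})
  \<or> \<comment> \<open>H.repeat\<close>
    (\<exists>(N::nat) (R :: ('v,'a) spec \<Rightarrow> nat \<Rightarrow> ('v,'a) op).
        (\<forall>s\<in>F. (\<forall>j\<le>N. predicate \<Sigma> (R s j)) \<and>
                loewner (full \<Sigma>) (fst s) (R s 0) \<and> loewner (full \<Sigma>) (R s N) (snd s)) \<and>
        S = Repeat N (Hole {(R s j, R s (Suc j)) | s j. s \<in> F \<and> j < N}))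
  \<or> \<comment> \<open>H.case\<close>
    (\<exists>qs Ms (Pw :: ('v,'a) spec \<Rightarrow> nat \<Rightarrow> ('v,'a) op).
        measurement \<Sigma> qs Ms \<and>
        (\<forall>s\<in>F. (\<forall>i<length Ms. predicate \<Sigma> (Pw s i)) \<and>
           loewner (full \<Sigma>) (fst s) (opsum {..<length Ms} (\<lambda>i. sandw \<Sigma> qs (Ms ! i) (Pw s i)))) \<and>
        S = Case qs (map (\<lambda>i. (Ms ! i, Hole ((\<lambda>s. (Pw s i, snd s)) ` F))) [0..<length Ms]))
  \<or> \<comment> \<open>HT.while\<close>
    (\<exists>qs B (R :: ('v,'a) spec \<Rightarrow> nat \<Rightarrow> ('v,'a) op).
        loewner (bas \<Sigma> qs) opzero B \<and> loewner (bas \<Sigma> qs) B (ident (bas \<Sigma> qs)) \<and>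
        (\<forall>s\<in>F. R s 0 = opzero \<and> (\<forall>n. predicate \<Sigma> (R s n)) \<and>
           (\<forall>n. loewner (full \<Sigma>) (R s n) (R s (Suc n))) \<and>
           (\<exists>Rlim. (\<forall>x\<in>full \<Sigma>. \<forall>y\<in>full \<Sigma>. (\<lambda>n. R s n x y) \<longlonglongrightarrow> Rlim x y) \<and>
              loewner (full \<Sigma>) (fst s) (opadd (B0 \<Sigma> qs B (snd s)) (B1 \<Sigma> qs B Rlim)))) \<and>
        S = While qs B (Hole {(R s (Suc n), opadd (B0 \<Sigma> qs B (snd s)) (B1 \<Sigma> qs B (R s n)))
                               | s n. s \<in> F}))"

inductive ref_tot :: "('v::finite \<Rightarrow> 'a::zero set) \<Rightarrow> ('v,'a) prog \<Rightarrow> ('v,'a) prog \<Rightarrow> bool"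
  for \<Sigma> where
  hole: "hole_ref_tot \<Sigma> F S \<Longrightarrow> ref_tot \<Sigma> (Hole F) S"
| seqL: "ref_tot \<Sigma> S1 S1' \<Longrightarrow> ref_tot \<Sigma> (Seq S1 S2) (Seq S1' S2)"
| seqR: "ref_tot \<Sigma> S2 S2' \<Longrightarrow> ref_tot \<Sigma> (Seq S1 S2) (Seq S1 S2')"
| repeat: "ref_tot \<Sigma> S S' \<Longrightarrow> ref_tot \<Sigma> (Repeat N S) (Repeat N S')"
| case_: "i < length Ms \<Longrightarrow> Ms ! i = (M, S) \<Longrightarrow> ref_tot \<Sigma> S S' \<Longrightarrow>
          ref_tot \<Sigma> (Case qs Ms) (Case qs (Ms[i := (M, S')]))"
| while: "ref_tot \<Sigma> S S' \<Longrightarrow> ref_tot \<Sigma> (While qs B S) (While qs B S')"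

definition ref_tot_star :: "('v::finite \<Rightarrow> 'a::zero set) \<Rightarrow> ('v,'a) prog \<Rightarrow> ('v,'a) prog \<Rightarrow> bool" where
  "ref_tot_star \<Sigma> = (ref_tot \<Sigma>)\<^sup>*\<^sup>*"

end

theory Submission
  imports Defs
begin

text \<open>All predicates that occur are of the form \<open>a Q + b Q\<^sup>\<bottom>\<close> on the decomposition
  \<open>H = ran Q \<oplus> ran Q\<^sup>\<bottom>\<close>. Since the square root of a projection is the projection itself, the measurement
  maps of \<open>Q\<^sup>\<bottom>\<close> and the Loewner order act on the coefficients \<open>(a, b)\<close>, and every side condition of a
  refinement rule becomes an inequality between reals. For the while loop the increasing invariants
  \<open>R\<^sub>n = r\<^sub>n Q\<^sup>\<bottom>\<close>, \<open>r\<^sub>n = 1 - (1 - \<epsilon>)\<^sup>n\<close>, converge to \<open>Q\<^sup>\<bottom>\<close>, and each body hole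
  \<open>{R\<^sub>n\<^sub>+\<^sub>1} \<box> {Q + r\<^sub>n Q\<^sup>\<bottom>}\<close> splits into the two given specifications with weights
  \<open>1 - r\<^sub>n\<close> and \<open>r\<^sub>n\<close>, because \<open>r\<^sub>n\<^sub>+\<^sub>1 = (1 - r\<^sub>n) \<epsilon> + r\<^sub>n\<close>. For the repetition the same recursion
  runs backwards from the last iteration, and \<open>N = \<lceil>log\<^bsub>1-\<epsilon>\<^esub> (1 - p)\<rceil>\<close> guarantees
  \<open>1 - (1 - \<epsilon>)\<^sup>N \<ge> p\<close>.\<close>

section \<open>Operator algebra on the standard basis\<close>

lemma opsub_apply [simp]: "opsub A C x y = A x y - C x y" by (simp add: opsub_def)
lemma opadd_apply [simp]: "opadd A C x y = A x y + C x y" by (simp add: opadd_def)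
lemma opscale_apply [simp]: "opscale c A x y = c * A x y" by (simp add: opscale_def)
lemma opzero_apply [simp]: "opzero x y = 0" by (simp add: opzero_def)

lemma opsub_opzero [simp]: "opsub A opzero = A"
  by (simp add: fun_eq_iff)

lemma opsum_pair: "a \<noteq> b \<Longrightarrow> opsum {a, b} f = opadd (f a) (f b)"
  by (simp add: opsum_def fun_eq_iff)

lemma mmult_assoc: "mmult B (mmult B A C) D = mmult B A (mmult B C D)"
  unfolding mmult_def
  by (auto simp: sum_distrib_left sum_distrib_right mult.assoc fun_eq_iff intro: sum.swap)

lemma mmult_opsub_right: "mmult B A (opsub C D) = opsub (mmult B A C) (mmult B A D)"
  by (simp add: mmult_def opsub_def fun_eq_iff right_diff_distrib sum_subtractf)
lemma mmult_opsub_left: "mmult B (opsub C D) A = opsub (mmult B C A) (mmult B D A)"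
  by (simp add: mmult_def opsub_def fun_eq_iff left_diff_distrib sum_subtractf)
lemma mmult_opadd_right: "mmult B A (opadd C D) = opadd (mmult B A C) (mmult B A D)"
  by (simp add: mmult_def opadd_def fun_eq_iff distrib_left sum.distrib)
lemma mmult_opadd_left: "mmult B (opadd C D) A = opadd (mmult B C A) (mmult B D A)"
  by (simp add: mmult_def opadd_def fun_eq_iff distrib_right sum.distrib)
lemma mmult_opscale_right: "mmult B A (opscale c C) = opscale c (mmult B A C)"
  by (simp add: mmult_def opscale_def fun_eq_iff sum_distrib_left mult.left_commute)
lemma mmult_opscale_left: "mmult B (opscale c C) A = opscale c (mmult B C A)"
  by (simp add: mmult_def opscale_def fun_eq_iff sum_distrib_left mult.assoc)

lemma mmult_ident_left: "finite B \<Longrightarrow> x \<in> B \<Longrightarrow> mmult B (ident B) A x y = A x y"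
  unfolding mmult_def ident_def by (simp add: if_distrib[of "\<lambda>c. c * _"] sum.delta' cong: if_cong)
lemma mmult_ident_right: "finite B \<Longrightarrow> y \<in> B \<Longrightarrow> mmult B A (ident B) x y = A x y"
  unfolding mmult_def ident_def by (simp add: if_distrib[of "\<lambda>c. _ * c"] sum.delta cong: if_cong)

definition supported :: "('v \<Rightarrow> 'a) set \<Rightarrow> ('v,'a) op \<Rightarrow> bool" where
  "supported B A \<longleftrightarrow> (\<forall>x y. x \<notin> B \<or> y \<notin> B \<longrightarrow> A x y = 0)"

lemma supported_eq:
  "supported B A \<Longrightarrow> supported B C \<Longrightarrow> eq_on B A C \<Longrightarrow> A = C"
  unfolding supported_def eq_on_def fun_eq_iff by metis

lemma supported_mmult: "supported B A \<Longrightarrow> supported B C \<Longrightarrow> supported B (mmult B A C)"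
  by (auto simp: supported_def mmult_def intro!: sum.neutral)

lemma supported_ident: "supported B (ident B)"
  by (simp add: supported_def ident_def)

lemma supported_opsub: "supported B A \<Longrightarrow> supported B C \<Longrightarrow> supported B (opsub A C)"
  by (simp add: supported_def)

lemma mmult_ident_left_supported:
  assumes "finite B" "supported B A"
  shows "mmult B (ident B) A = A"
proof (intro ext)
  fix x y show "mmult B (ident B) A x y = A x y"
  proof (cases "x \<in> B")
    case True then show ?thesis by (simp add: mmult_ident_left assms(1))
  next
    case False then show ?thesis using assms(2) by (simp add: supported_def mmult_def ident_def)
  qed
qed

lemma mmult_ident_right_supported:
  assumes "finite B" "supported B A"
  shows "mmult B A (ident B) = A"
proof (intro ext)
  fix x y show "mmult B A (ident B) x y = A x y"
  proof (cases "y \<in> B")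
    case True then show ?thesis by (simp add: mmult_ident_right assms(1))
  next
    case False then show ?thesis
      using assms(2) by (auto simp: supported_def mmult_def ident_def intro!: sum.neutral)
  qed
qed

definition herm :: "('v \<Rightarrow> 'a) set \<Rightarrow> ('v,'a) op \<Rightarrow> bool" where
  "herm B A \<longleftrightarrow> (\<forall>x\<in>B. \<forall>y\<in>B. A x y = cnj (A y x))"

lemma psd_herm: "psd B A \<Longrightarrow> herm B A"
  unfolding psd_def herm_def by blast

lemma herm_opsub: "herm B A \<Longrightarrow> herm B C \<Longrightarrow> herm B (opsub A C)"
  unfolding herm_def by (metis complex_cnj_diff opsub_apply)

lemma herm_mmult_cnj:
  assumes "herm B A" "herm B C" "x \<in> B" "y \<in> B"
  shows "mmult B A C x y = cnj (mmult B C A y x)"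
proof -
  have "mmult B A C x y = (\<Sum>z\<in>B. cnj (A z x) * cnj (C y z))"
    unfolding mmult_def using assms by (intro sum.cong refl) (metis herm_def)
  also have "\<dots> = cnj (mmult B C A y x)"
    unfolding mmult_def by (simp add: cnj_sum mult.commute)
  finally show ?thesis .
qed

lemma herm_mmult_commuting:
  "herm B A \<Longrightarrow> herm B C \<Longrightarrow> mmult B A C = mmult B C A \<Longrightarrow> herm B (mmult B A C)"
  using herm_mmult_cnj unfolding herm_def by metis

text \<open>For Hermitian \<open>H\<close> the diagonal entry \<open>(H\<^sup>2) x x\<close> is the squared norm of the column \<open>H _ x\<close>.\<close>

lemma herm_square_diag_nonpos_imp_zero:
  assumes herm: "herm B H" and fin: "finite B" and x: "x \<in> B" and z: "z \<in> B"
    and le: "Re (mmult B H H x x) \<le> 0"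
  shows "H z x = 0"
proof -
  have "mmult B H H x x = (\<Sum>w\<in>B. complex_of_real ((cmod (H w x))\<^sup>2))"
    unfolding mmult_def
  proof (rule sum.cong)
    fix w assume w: "w \<in> B"
    have "H x w = cnj (H w x)" using herm x w unfolding herm_def by blast
    then have "H x w * H w x = H w x * cnj (H w x)" by (simp add: mult.commute)
    also have "\<dots> = complex_of_real ((cmod (H w x))\<^sup>2)" by (rule complex_norm_square[symmetric])
    finally show "H x w * H w x = complex_of_real ((cmod (H w x))\<^sup>2)" .
  qed simp
  then have "Re (mmult B H H x x) = (\<Sum>w\<in>B. (cmod (H w x))\<^sup>2)"
    by simp
  with le have "(\<Sum>w\<in>B. (cmod (H w x))\<^sup>2) = 0"
    by (metis (no_types, lifting) order_antisym sum_nonneg zero_le_power2)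
  then have "\<forall>w\<in>B. (cmod (H w x))\<^sup>2 = 0"
    using fin by (subst (asm) sum_nonneg_eq_0_iff) auto
  then show ?thesis using z by simp
qed

lemma psd_congruence_diag:
  assumes S: "psd B S" and V: "herm B V" and x: "x \<in> B"
  shows "0 \<le> Re (mmult B V (mmult B S V) x x)"
proof -
  have "mmult B V (mmult B S V) x x = (\<Sum>a\<in>B. \<Sum>b\<in>B. cnj (V a x) * S a b * V b x)"
    unfolding mmult_def
  proof (rule sum.cong)
    fix a assume a: "a \<in> B"
    have "V x a = cnj (V a x)" using V x a unfolding herm_def by blast
    then show "V x a * (\<Sum>b\<in>B. S a b * V b x) = (\<Sum>b\<in>B. cnj (V a x) * S a b * V b x)"
      by (simp add: sum_distrib_left mult.assoc)
  qed simp
  moreover have "0 \<le> Re (\<Sum>a\<in>B. \<Sum>b\<in>B. cnj (V a x) * S a b * V b x)"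
    using spec[OF conjunct2[OF S[unfolded psd_def]], of "\<lambda>b. V b x"] by simp
  ultimately show ?thesis by simp
qed

text \<open>First \<open>(S\<^sup>3 - S)\<^sup>2 = 0\<close>
  gives \<open>S\<^sup>3 = S\<close>; then \<open>V = S - S\<^sup>2\<close> satisfies \<open>V\<^sup>2 = -2V\<close> and \<open>V S V = 2V\<close>, so by positivity
  of \<open>S\<close> the diagonal of \<open>V\<^sup>2\<close> is nonpositive and \<open>V = 0\<close>.\<close>

lemma psd_sqrt_of_projection:
  assumes fin: "finite B" and S: "psd B S" and supp: "supported B S"
    and proj: "mmult B (mmult B S S) (mmult B S S) = mmult B S S"
  shows "mmult B S S = S"
proof -
  have hS: "herm B S" using S by (rule psd_herm)
  have hS2: "herm B (mmult B S S)" by (rule herm_mmult_commuting[OF hS hS refl])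
  have S4: "mmult B S (mmult B S (mmult B S S)) = mmult B S S"
    using proj by (simp add: mmult_assoc)
  have S4X: "mmult B S (mmult B S (mmult B S (mmult B S X))) = mmult B S (mmult B S X)" for X
    using arg_cong[OF S4, of "\<lambda>A. mmult B A X"] by (simp add: mmult_assoc)
  define U where "U = opsub (mmult B S (mmult B S S)) S"
  have "U z x = 0" if "x \<in> B" "z \<in> B" for x z
  proof (rule herm_square_diag_nonpos_imp_zero[OF _ fin that])
    show "herm B U"
      unfolding U_def
      by (rule herm_opsub[OF herm_mmult_commuting[OF hS hS2] hS]) (simp add: mmult_assoc)
    have "mmult B U U = opzero"
      by (simp add: U_def mmult_opsub_left mmult_opsub_right mmult_assoc S4X S4 fun_eq_iff)
    then show "Re (mmult B U U x x) \<le> 0" by simp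
  qed
  moreover have "supported B U"
    unfolding U_def by (intro supported_opsub supported_mmult supp)
  ultimately have "U = opzero"
    by (intro supported_eq) (auto simp: supported_def eq_on_def)
  then have S3: "mmult B S (mmult B S S) = S"
    by (simp add: U_def fun_eq_iff)
  have S3X: "mmult B S (mmult B S (mmult B S X)) = mmult B S X" for X
    using arg_cong[OF S3, of "\<lambda>A. mmult B A X"] by (simp add: mmult_assoc)
  define V where "V = opsub S (mmult B S S)"
  have hV: "herm B V" unfolding V_def by (rule herm_opsub[OF hS hS2])
  have VV: "mmult B V V = opscale (-2) V"
    by (simp add: V_def mmult_opsub_left mmult_opsub_right mmult_assoc S3X S3 fun_eq_iff)
  have VSV: "mmult B V (mmult B S V) = opscale 2 V"
    by (simp add: V_def mmult_opsub_left mmult_opsub_right mmult_assoc S3X S3 fun_eq_iff)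
  have "V z x = 0" if "x \<in> B" "z \<in> B" for x z
  proof (rule herm_square_diag_nonpos_imp_zero[OF hV fin that])
    show "Re (mmult B V V x x) \<le> 0"
      using psd_congruence_diag[OF S hV that(1)] by (simp add: VV VSV)
  qed
  moreover have "supported B V"
    unfolding V_def by (intro supported_opsub supported_mmult supp)
  ultimately have "V = opzero"
    by (intro supported_eq) (auto simp: supported_def eq_on_def)
  then show ?thesis
    by (simp add: V_def fun_eq_iff)
qed

lemma psd_opadd:
  assumes A: "psd B A" and C: "psd B C"
  shows "psd B (opadd A C)"
  unfolding psd_def
proof (intro conjI ballI allI)
  fix x y assume "x \<in> B" "y \<in> B"
  then have "A x y = cnj (A y x)" "C x y = cnj (C y x)" using A C unfolding psd_def by blast+
  then show "opadd A C x y = cnj (opadd A C y x)" by simp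
next
  fix \<psi> :: "_ \<Rightarrow> complex"
  have "0 \<le> Re (\<Sum>x\<in>B. \<Sum>y\<in>B. cnj (\<psi> x) * A x y * \<psi> y)"
       "0 \<le> Re (\<Sum>x\<in>B. \<Sum>y\<in>B. cnj (\<psi> x) * C x y * \<psi> y)"
    using A C unfolding psd_def by blast+
  then show "0 \<le> Re (\<Sum>x\<in>B. \<Sum>y\<in>B. cnj (\<psi> x) * opadd A C x y * \<psi> y)"
    by (simp add: distrib_left distrib_right sum.distrib)
qed

lemma psd_opscale:
  assumes A: "psd B A" and c: "0 \<le> c"
  shows "psd B (opscale (complex_of_real c) A)"
  unfolding psd_def
proof (intro conjI ballI allI)
  fix x y assume "x \<in> B" "y \<in> B"
  then have "A x y = cnj (A y x)" using A unfolding psd_def by blast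
  then show "opscale (complex_of_real c) A x y = cnj (opscale (complex_of_real c) A y x)" by simp
next
  fix \<psi> :: "_ \<Rightarrow> complex"
  have "(\<Sum>x\<in>B. \<Sum>y\<in>B. cnj (\<psi> x) * opscale (complex_of_real c) A x y * \<psi> y)
      = complex_of_real c * (\<Sum>x\<in>B. \<Sum>y\<in>B. cnj (\<psi> x) * A x y * \<psi> y)"
    by (simp add: sum_distrib_left mult_ac)
  moreover have "0 \<le> Re (\<Sum>x\<in>B. \<Sum>y\<in>B. cnj (\<psi> x) * A x y * \<psi> y)"
    using A unfolding psd_def by blast
  ultimately show "0 \<le> Re (\<Sum>x\<in>B. \<Sum>y\<in>B. cnj (\<psi> x) * opscale (complex_of_real c) A x y * \<psi> y)"
    using c by simp
qed

lemma loewner_refl: "loewner B A A"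
  by (simp add: loewner_def psd_def)

lemma orth_proj_compl:
  assumes P: "orth_proj B P" and fin: "finite B"
  shows "orth_proj B (opsub (ident B) P)"
proof -
  have adjP: "adj P x y = P x y" and PP: "mmult B P P x y = P x y" if "x \<in> B" "y \<in> B" for x y
    using P that unfolding orth_proj_def eq_on_def by blast+
  have "eq_on B (adj (opsub (ident B) P)) (opsub (ident B) P)"
    unfolding eq_on_def
  proof (intro ballI)
    fix x y assume xy: "x \<in> B" "y \<in> B"
    have "cnj (P y x) = P x y" using adjP[OF xy] by (simp add: adj_def)
    then show "adj (opsub (ident B) P) x y = opsub (ident B) P x y"
      using xy by (simp add: adj_def ident_def)
  qed
  moreover have "eq_on B (mmult B (opsub (ident B) P) (opsub (ident B) P)) (opsub (ident B) P)"
    unfolding eq_on_def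
    by (simp add: mmult_opsub_left mmult_opsub_right mmult_ident_left[OF fin]
        mmult_ident_right[OF fin] PP)
  ultimately show ?thesis by (simp add: orth_proj_def)
qed

text \<open>The quadratic form of a projection is \<open>\<psi>\<^sup>* P\<^sup>* P \<psi> = \<parallel>P \<psi>\<parallel>\<^sup>2\<close>.\<close>

lemma orth_proj_psd:
  assumes "orth_proj B P"
  shows "psd B P"
proof -
  have herm: "P x y = cnj (P y x)" if "x \<in> B" "y \<in> B" for x y
  proof -
    have "adj P x y = P x y" using assms that unfolding orth_proj_def eq_on_def by blast
    then show ?thesis unfolding adj_def by (rule sym)
  qed
  have PP: "P x y = (\<Sum>z\<in>B. P x z * P z y)" if "x \<in> B" "y \<in> B" for x y
  proof -
    have "mmult B P P x y = P x y" using assms that unfolding orth_proj_def eq_on_def by blast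
    then show ?thesis unfolding mmult_def by (rule sym)
  qed
  have "0 \<le> Re (\<Sum>x\<in>B. \<Sum>y\<in>B. cnj (\<psi> x) * P x y * \<psi> y)" for \<psi>
  proof -
    define w where "w z = (\<Sum>y\<in>B. P z y * \<psi> y)" for z
    have "(\<Sum>x\<in>B. \<Sum>y\<in>B. cnj (\<psi> x) * P x y * \<psi> y) =
          (\<Sum>x\<in>B. \<Sum>y\<in>B. \<Sum>z\<in>B. cnj (\<psi> x) * P x z * (P z y * \<psi> y))"
    proof (intro sum.cong refl)
      fix x y assume "x \<in> B" "y \<in> B"
      then show "cnj (\<psi> x) * P x y * \<psi> y = (\<Sum>z\<in>B. cnj (\<psi> x) * P x z * (P z y * \<psi> y))"
        by (subst PP) (simp_all add: sum_distrib_left sum_distrib_right mult.assoc)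
    qed
    also have "\<dots> = (\<Sum>z\<in>B. \<Sum>x\<in>B. \<Sum>y\<in>B. cnj (\<psi> x) * P x z * (P z y * \<psi> y))"
      by (subst sum.swap) (intro sum.cong refl sum.swap)
    also have "\<dots> = (\<Sum>z\<in>B. (\<Sum>x\<in>B. cnj (\<psi> x) * P x z) * w z)"
      by (simp add: w_def sum_product)
    also have "\<dots> = (\<Sum>z\<in>B. complex_of_real ((cmod (w z))\<^sup>2))"
    proof (intro sum.cong refl)
      fix z assume z: "z \<in> B"
      have "(\<Sum>x\<in>B. cnj (\<psi> x) * P x z) = cnj (w z)"
        unfolding w_def cnj_sum by (intro sum.cong refl) (simp add: herm[OF _ z] mult.commute)
      then show "(\<Sum>x\<in>B. cnj (\<psi> x) * P x z) * w z = complex_of_real ((cmod (w z))\<^sup>2)"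
        by (subst complex_norm_square) (simp add: mult.commute)
    qed
    finally show ?thesis by (simp add: sum_nonneg)
  qed
  with herm show ?thesis unfolding psd_def by blast
qed

lemma orth_proj_idem: "orth_proj B P \<Longrightarrow> supported B P \<Longrightarrow> mmult B P P = P"
  unfolding orth_proj_def by (blast intro: supported_eq supported_mmult)

section \<open>Lifting operators from \<open>H_qs\<close> to \<open>H\<close>\<close>

definition agree_outside :: "'v set \<Rightarrow> ('v \<Rightarrow> 'a) \<Rightarrow> ('v \<Rightarrow> 'a) \<Rightarrow> bool" where
  "agree_outside qs x y \<longleftrightarrow> (\<forall>v. v \<notin> qs \<longrightarrow> x v = y v)"

lemma lift_agree_outside:
  "lift \<Sigma> qs A x y = (if x \<in> full \<Sigma> \<and> y \<in> full \<Sigma> \<and> agree_outside qs x y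
     then A (restrict x qs) (restrict y qs) else 0)"
  by (simp add: lift_def agree_outside_def)

lemma finite_bas: "wf_alph \<Sigma> \<Longrightarrow> finite (bas \<Sigma> qs)"
  unfolding bas_def wf_alph_def by (intro finite_PiE) auto

lemma restrict_in_bas: "x \<in> full \<Sigma> \<Longrightarrow> restrict x qs \<in> bas \<Sigma> qs"
  by (auto simp: bas_def)

lemma supported_lift: "supported (full \<Sigma>) (lift \<Sigma> qs A)"
  by (simp add: supported_def lift_def)

lemma lift_opsub: "lift \<Sigma> qs (opsub A C) = opsub (lift \<Sigma> qs A) (lift \<Sigma> qs C)"
  by (auto simp: lift_def fun_eq_iff)

lemma lift_adj: "adj (lift \<Sigma> qs A) = lift \<Sigma> qs (adj A)"
  by (auto simp: adj_def lift_def fun_eq_iff)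

lemma lift_cong: "eq_on (bas \<Sigma> qs) A C \<Longrightarrow> lift \<Sigma> qs A = lift \<Sigma> qs C"
  by (auto simp: lift_def fun_eq_iff eq_on_def restrict_in_bas)

lemma lift_ident: "lift \<Sigma> qs (ident (bas \<Sigma> qs)) = Id_full \<Sigma>"
proof (intro ext)
  fix x y
  show "lift \<Sigma> qs (ident (bas \<Sigma> qs)) x y = Id_full \<Sigma> x y"
  proof (cases "x \<in> full \<Sigma> \<and> y \<in> full \<Sigma> \<and> agree_outside qs x y")
    case True
    have "restrict x qs = restrict y qs \<longleftrightarrow> x = y"
    proof
      assume "restrict x qs = restrict y qs"
      then have "x v = y v" for v
        using True by (cases "v \<in> qs") (auto simp: agree_outside_def dest: fun_cong[where x = v])
      then show "x = y" by auto
    qed simp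
    then show ?thesis
      using True restrict_in_bas[of x \<Sigma> qs] by (simp add: lift_agree_outside ident_def)
  next
    case False
    then show ?thesis by (auto simp: lift_agree_outside ident_def agree_outside_def)
  qed
qed

text \<open>Summing over the basis of \<open>H\<close> against lifted operators only sees the assignments that agree
  with \<open>x\<close> outside \<open>qs\<close>; these are in bijection with the basis of \<open>H_qs\<close> via restriction.\<close>

lemma lift_mmult:
  assumes fin: "finite (full \<Sigma>)"
  shows "mmult (full \<Sigma>) (lift \<Sigma> qs A) (lift \<Sigma> qs C) = lift \<Sigma> qs (mmult (bas \<Sigma> qs) A C)"
proof (intro ext)
  fix x y
  show "mmult (full \<Sigma>) (lift \<Sigma> qs A) (lift \<Sigma> qs C) x y = lift \<Sigma> qs (mmult (bas \<Sigma> qs) A C) x y"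
  proof (cases "x \<in> full \<Sigma> \<and> y \<in> full \<Sigma> \<and> agree_outside qs x y")
    case False
    then show ?thesis
      by (auto simp: mmult_def lift_agree_outside agree_outside_def intro!: sum.neutral)
  next
    case True
    then have x: "x \<in> full \<Sigma>" and y: "y \<in> full \<Sigma>" and xy: "agree_outside qs x y" by auto
    define Z where "Z = {z \<in> full \<Sigma>. agree_outside qs x z}"
    have "mmult (full \<Sigma>) (lift \<Sigma> qs A) (lift \<Sigma> qs C) x y =
          (\<Sum>z\<in>full \<Sigma>. if agree_outside qs x z
             then A (restrict x qs) (restrict z qs) * C (restrict z qs) (restrict y qs) else 0)"
      unfolding mmult_def
      by (rule sum.cong) (use x y xy in \<open>auto simp: lift_agree_outside agree_outside_def\<close>)
    also have "\<dots> = (\<Sum>z\<in>Z. A (restrict x qs) (restrict z qs) * C (restrict z qs) (restrict y qs))"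
      unfolding Z_def using fin by (simp add: sum.inter_filter)
    also have "\<dots> = (\<Sum>w\<in>bas \<Sigma> qs. A (restrict x qs) w * C w (restrict y qs))"
    proof (rule sum.reindex_bij_witness[where j = "\<lambda>z. restrict z qs"
          and i = "\<lambda>w v. if v \<in> qs then w v else x v"])
      fix z assume "z \<in> Z"
      then show "(\<lambda>v. if v \<in> qs then restrict z qs v else x v) = z"
        and "restrict z qs \<in> bas \<Sigma> qs"
        by (auto simp: Z_def agree_outside_def bas_def)
    next
      fix w assume w: "w \<in> bas \<Sigma> qs"
      then show "restrict (\<lambda>v. if v \<in> qs then w v else x v) qs = w"
        and "(\<lambda>v. if v \<in> qs then w v else x v) \<in> Z"
        using x by (auto simp: Z_def bas_def agree_outside_def PiE_def Pi_def extensional_def)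
    qed simp
    also have "\<dots> = lift \<Sigma> qs (mmult (bas \<Sigma> qs) A C) x y"
      using x y xy by (simp add: lift_agree_outside mmult_def)
    finally show ?thesis .
  qed
qed

lemma orth_proj_lift:
  assumes fin: "finite (full \<Sigma>)" and P: "orth_proj (bas \<Sigma> qs) P"
  shows "orth_proj (full \<Sigma>) (lift \<Sigma> qs P)"
proof -
  have "adj (lift \<Sigma> qs P) = lift \<Sigma> qs P"
    using P unfolding orth_proj_def lift_adj by (blast intro: lift_cong)
  moreover have "mmult (full \<Sigma>) (lift \<Sigma> qs P) (lift \<Sigma> qs P) = lift \<Sigma> qs P"
    using P unfolding orth_proj_def lift_mmult[OF fin] by (blast intro: lift_cong)
  ultimately show ?thesis by (simp add: orth_proj_def eq_on_def)
qed

lemma op_sqrt_lift_orth_proj: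
  assumes fin: "finite (full \<Sigma>)" and P: "orth_proj (bas \<Sigma> qs) P"
  shows "op_sqrt (full \<Sigma>) (lift \<Sigma> qs P) = lift \<Sigma> qs P"
proof -
  have LP: "orth_proj (full \<Sigma>) (lift \<Sigma> qs P)" by (rule orth_proj_lift[OF fin P])
  have LPLP: "mmult (full \<Sigma>) (lift \<Sigma> qs P) (lift \<Sigma> qs P) = lift \<Sigma> qs P"
    by (rule orth_proj_idem[OF LP supported_lift])
  show ?thesis
    unfolding op_sqrt_def
  proof (rule the_equality)
    show "psd (full \<Sigma>) (lift \<Sigma> qs P) \<and> (\<forall>x y. x \<notin> full \<Sigma> \<or> y \<notin> full \<Sigma> \<longrightarrow> lift \<Sigma> qs P x y = 0)
        \<and> eq_on (full \<Sigma>) (mmult (full \<Sigma>) (lift \<Sigma> qs P) (lift \<Sigma> qs P)) (lift \<Sigma> qs P)"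
      using orth_proj_psd[OF LP] supported_lift[of \<Sigma> qs P]
      unfolding supported_def LPLP eq_on_def by blast
  next
    fix S
    assume S: "psd (full \<Sigma>) S \<and> (\<forall>x y. x \<notin> full \<Sigma> \<or> y \<notin> full \<Sigma> \<longrightarrow> S x y = 0)
        \<and> eq_on (full \<Sigma>) (mmult (full \<Sigma>) S S) (lift \<Sigma> qs P)"
    then have supp: "supported (full \<Sigma>) S" by (simp add: supported_def)
    have SS: "mmult (full \<Sigma>) S S = lift \<Sigma> qs P"
      using S supported_eq[OF supported_mmult[OF supp supp] supported_lift] by blast
    have "mmult (full \<Sigma>) S S = S"
      using psd_sqrt_of_projection[OF fin _ supp] S by (simp add: SS LPLP)
    then show "S = lift \<Sigma> qs P" by (simp add: SS)
  qed
qed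

lemma sandw_orth_proj:
  "finite (full \<Sigma>) \<Longrightarrow> orth_proj (bas \<Sigma> qs) P \<Longrightarrow>
   sandw \<Sigma> qs P X = mmult (full \<Sigma>) (mmult (full \<Sigma>) (lift \<Sigma> qs P) X) (lift \<Sigma> qs P)"
  by (simp add: sandw_def op_sqrt_lift_orth_proj Let_def)

section \<open>Derived refinement rules\<close>

lemma ref_tot_star_lift:
  assumes step: "\<And>S S'. ref_tot \<Sigma> S S' \<Longrightarrow> ref_tot \<Sigma> (C S) (C S')"
    and "ref_tot_star \<Sigma> S S'"
  shows "ref_tot_star \<Sigma> (C S) (C S')"
  using assms(2) unfolding ref_tot_star_def
  by (induction rule: rtranclp_induct) (auto intro: rtranclp.rtrancl_into_rtrancl step)

lemma ref_tot_IfThenElse_then: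
  assumes "ref_tot \<Sigma> S1 S1'"
  shows "ref_tot \<Sigma> (IfThenElse \<Sigma> qs B S1 S0) (IfThenElse \<Sigma> qs B S1' S0)"
  using ref_tot.case_[where i = 0 and Ms = "[(B, S1), (opsub (ident (bas \<Sigma> qs)) B, S0)]"
      and M = B and S = S1 and S' = S1' and qs = qs, OF _ _ assms]
  by (simp add: IfThenElse_def)

lemma ref_tot_IfThenElse_else:
  assumes "ref_tot \<Sigma> S0 S0'"
  shows "ref_tot \<Sigma> (IfThenElse \<Sigma> qs B S1 S0) (IfThenElse \<Sigma> qs B S1 S0')"
  using ref_tot.case_[where i = 1 and Ms = "[(B, S1), (opsub (ident (bas \<Sigma> qs)) B, S0)]"
      and M = "opsub (ident (bas \<Sigma> qs)) B" and S = S0 and S' = S0' and qs = qs, OF _ _ assms]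
  by (simp add: IfThenElse_def)

text \<open>Unfolding \<open>hole_ref_tot\<close> for a program with a known head constructor, these rules discard
  every disjunct except the one of the rule that produces this constructor.\<close>

lemmas hole_ref_tot_select = prog.distinct prog.inject simp_thms ex_simps

lemma ref_tot_skipI:
  "(\<And>s. s \<in> F \<Longrightarrow> loewner (full \<Sigma>) (fst s) (snd s)) \<Longrightarrow> ref_tot \<Sigma> (Hole F) Skip"
  by (rule ref_tot.hole) (auto simp: hole_ref_tot_def)

lemma ref_tot_splitI:
  fixes P' Q' :: "nat \<Rightarrow> ('v::finite, 'a::zero) op"
  assumes "finite \<Gamma>" and "F \<noteq> {}"
    and pred: "\<And>g. g \<in> \<Gamma> \<Longrightarrow> predicate \<Sigma> (P' g) \<and> predicate \<Sigma> (Q' g)"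
    and weights: "\<And>s. s \<in> F \<Longrightarrow> \<exists>p. (\<forall>g\<in>\<Gamma>. 0 \<le> p g) \<and>
        loewner (full \<Sigma>) (fst s) (opsum \<Gamma> (\<lambda>g. opscale (complex_of_real (p g)) (P' g))) \<and>
        loewner (full \<Sigma>) (opsum \<Gamma> (\<lambda>g. opscale (complex_of_real (p g)) (Q' g))) (snd s)"
  shows "ref_tot \<Sigma> (Hole F) (Hole ((\<lambda>g. (P' g, Q' g)) ` \<Gamma>))"
proof (rule ref_tot.hole)
  have "\<forall>s\<in>F. \<exists>p. (\<forall>g\<in>\<Gamma>. 0 \<le> p g) \<and>
      loewner (full \<Sigma>) (fst s) (opsum \<Gamma> (\<lambda>g. opscale (complex_of_real (p g)) (P' g))) \<and>
      loewner (full \<Sigma>) (opsum \<Gamma> (\<lambda>g. opscale (complex_of_real (p g)) (Q' g))) (snd s)"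
    using weights by blast
  then obtain p where p: "\<forall>s\<in>F. (\<forall>g\<in>\<Gamma>. 0 \<le> p s g) \<and>
      loewner (full \<Sigma>) (fst s) (opsum \<Gamma> (\<lambda>g. opscale (complex_of_real (p s g)) (P' g))) \<and>
      loewner (full \<Sigma>) (opsum \<Gamma> (\<lambda>g. opscale (complex_of_real (p s g)) (Q' g))) (snd s)"
    by (auto dest!: bchoice)
  have "(\<lambda>g. (P' g, Q' g)) ` \<Gamma> = {(P' g, Q' g) | s g. s \<in> F \<and> g \<in> \<Gamma>}"
    using \<open>F \<noteq> {}\<close> by blast
  then show "hole_ref_tot \<Sigma> F (Hole ((\<lambda>g. (P' g, Q' g)) ` \<Gamma>))"
    unfolding hole_ref_tot_def
    by (simp only: hole_ref_tot_select)
      (use \<open>finite \<Gamma>\<close> pred p in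
        \<open>intro exI[of _ \<Gamma>] conjI exI[of _ p] exI[of _ "\<lambda>_. P'"] exI[of _ "\<lambda>_. Q'"]; simp\<close>)
qed

lemma ref_tot_repeatI:
  assumes "\<And>s. s \<in> F \<Longrightarrow> (\<forall>j\<le>N. predicate \<Sigma> (R s j)) \<and>
      loewner (full \<Sigma>) (fst s) (R s 0) \<and> loewner (full \<Sigma>) (R s N) (snd s)"
  shows "ref_tot \<Sigma> (Hole F) (Repeat N (Hole {(R s j, R s (Suc j)) | s j. s \<in> F \<and> j < N}))"
  by (intro ref_tot.hole) (unfold hole_ref_tot_def, simp only: hole_ref_tot_select,
      use assms in blast)

lemma ref_tot_IfThenElseI:
  fixes \<Sigma> :: "'v::finite \<Rightarrow> 'a::zero set"
  assumes "psd (bas \<Sigma> qs) B" and "psd (bas \<Sigma> qs) (opsub (ident (bas \<Sigma> qs)) B)"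
    and "\<And>s. s \<in> F \<Longrightarrow> predicate \<Sigma> (P1 s) \<and> predicate \<Sigma> (P0 s) \<and>
        loewner (full \<Sigma>) (fst s)
          (opadd (sandw \<Sigma> qs B (P1 s)) (sandw \<Sigma> qs (opsub (ident (bas \<Sigma> qs)) B) (P0 s)))"
  shows "ref_tot \<Sigma> (Hole F)
    (IfThenElse \<Sigma> qs B (Hole ((\<lambda>s. (P1 s, snd s)) ` F)) (Hole ((\<lambda>s. (P0 s, snd s)) ` F)))"
proof (rule ref_tot.hole)
  define Ms where "Ms = [B, opsub (ident (bas \<Sigma> qs)) B]"
  define Pw where "Pw s i = (if i = 0 then P1 s else P0 s)" for s and i :: nat
  have sum2: "opsum {..<length Ms} f = opadd (f 0) (f 1)" for f :: "nat \<Rightarrow> ('v, 'a) op"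
    by (simp add: Ms_def opsum_def opadd_def lessThan_Suc fun_eq_iff)
  have "measurement \<Sigma> qs Ms"
    using assms(1,2) by (simp add: measurement_def sum2 eq_on_def) (simp add: Ms_def)
  moreover have "\<forall>s\<in>F. (\<forall>i<length Ms. predicate \<Sigma> (Pw s i)) \<and>
      loewner (full \<Sigma>) (fst s) (opsum {..<length Ms} (\<lambda>i. sandw \<Sigma> qs (Ms ! i) (Pw s i)))"
    using assms(3) by (simp add: sum2) (auto simp: Pw_def Ms_def less_Suc_eq)
  moreover have "IfThenElse \<Sigma> qs B (Hole ((\<lambda>s. (P1 s, snd s)) ` F)) (Hole ((\<lambda>s. (P0 s, snd s)) ` F))
      = Case qs (map (\<lambda>i. (Ms ! i, Hole ((\<lambda>s. (Pw s i, snd s)) ` F))) [0..<length Ms])"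
    by (simp add: IfThenElse_def Ms_def Pw_def upt_rec)
  ultimately show "hole_ref_tot \<Sigma> F (IfThenElse \<Sigma> qs B (Hole ((\<lambda>s. (P1 s, snd s)) ` F))
      (Hole ((\<lambda>s. (P0 s, snd s)) ` F)))"
    unfolding hole_ref_tot_def IfThenElse_def
    by (simp only: hole_ref_tot_select) blast
qed

lemma ref_tot_whileI:
  assumes "loewner (bas \<Sigma> qs) opzero B" and "loewner (bas \<Sigma> qs) B (ident (bas \<Sigma> qs))"
    and "\<And>s. s \<in> F \<Longrightarrow> R s 0 = opzero \<and> (\<forall>n. predicate \<Sigma> (R s n)) \<and>
        (\<forall>n. loewner (full \<Sigma>) (R s n) (R s (Suc n))) \<and>
        (\<forall>x\<in>full \<Sigma>. \<forall>y\<in>full \<Sigma>. (\<lambda>n. R s n x y) \<longlonglongrightarrow> Rlim s x y) \<and>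
        loewner (full \<Sigma>) (fst s) (opadd (B0 \<Sigma> qs B (snd s)) (B1 \<Sigma> qs B (Rlim s)))"
  shows "ref_tot \<Sigma> (Hole F) (While qs B
      (Hole {(R s (Suc n), opadd (B0 \<Sigma> qs B (snd s)) (B1 \<Sigma> qs B (R s n))) | s n. s \<in> F}))"
  by (intro ref_tot.hole) (unfold hole_ref_tot_def, simp only: hole_ref_tot_select,
      use assms in blast)

section \<open>Boosting the success probability\<close>

lemma pow_nat_ceiling_log_le:
  fixes b x :: real
  assumes "0 < b" "b < 1" "0 < x"
  shows "b ^ nat \<lceil>log b x\<rceil> \<le> x"
proof -
  have "log b x \<le> real (nat \<lceil>log b x\<rceil>)" by (rule real_nat_ceiling_ge)
  then have "b powr real (nat \<lceil>log b x\<rceil>) \<le> b powr log b x"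
    using assms by (intro powr_mono') auto
  also have "\<dots> = x" using assms by simp
  finally show ?thesis using assms by (simp add: powr_realpow)
qed

locale boost_setting =
  fixes \<Sigma> :: "'v::finite \<Rightarrow> 'a::zero set" and qs :: "'v set" and Q :: "('v,'a) op"
  assumes wf: "wf_alph \<Sigma>" and proj: "orth_proj (bas \<Sigma> qs) Q"
begin

abbreviation Qperp :: "('v,'a) op" where
  "Qperp \<equiv> opsub (ident (bas \<Sigma> qs)) Q"

definition Qmix :: "real \<Rightarrow> real \<Rightarrow> ('v,'a) op" where
  "Qmix a b = opadd (opscale (complex_of_real a) (lift \<Sigma> qs Q)) (opscale (complex_of_real b) (lift \<Sigma> qs Qperp))"

abbreviation boost_hole :: "real \<Rightarrow> ('v,'a) prog" where
  "boost_hole \<epsilon> \<equiv> Hole {(opscale (complex_of_real \<epsilon>) (lift \<Sigma> qs Qperp), lift \<Sigma> qs Q),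
                          (lift \<Sigma> qs Qperp, Id_full \<Sigma>)}"

lemma finite_full: "finite (full \<Sigma>)"
  using finite_bas[OF wf] .

lemma orth_proj_Qperp: "orth_proj (bas \<Sigma> qs) Qperp"
  by (rule orth_proj_compl[OF proj finite_bas[OF wf]])

lemma compl_Qperp: "opsub (ident (bas \<Sigma> qs)) Qperp = Q"
  by (simp add: fun_eq_iff)

lemma Qmix_apply: "Qmix a b x y = complex_of_real a * lift \<Sigma> qs Q x y + complex_of_real b * lift \<Sigma> qs Qperp x y"
  by (simp add: Qmix_def)

lemma lift_Q_Qmix: "lift \<Sigma> qs Q = Qmix 1 0"
  and lift_Qperp_Qmix: "lift \<Sigma> qs Qperp = Qmix 0 1"
  and Id_full_Qmix: "Id_full \<Sigma> = Qmix 1 1"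
  and opzero_Qmix: "opzero = Qmix 0 0"
  by (simp_all add: fun_eq_iff Qmix_apply lift_opsub lift_ident)

lemma opadd_Qmix: "opadd (Qmix a b) (Qmix c d) = Qmix (a + c) (b + d)"
  and opsub_Qmix: "opsub (Qmix a b) (Qmix c d) = Qmix (a - c) (b - d)"
  and opscale_Qmix: "opscale (complex_of_real c) (Qmix a b) = Qmix (c * a) (c * b)"
  by (simp_all add: fun_eq_iff Qmix_apply algebra_simps)

lemma mmult_Qmix: "mmult (full \<Sigma>) (Qmix a b) (Qmix c d) = Qmix (a * c) (b * d)"
proof -
  let ?L = "lift \<Sigma> qs Q" and ?M = "mmult (full \<Sigma>)"
  have LL: "?M ?L ?L = ?L"
    by (rule orth_proj_idem[OF orth_proj_lift[OF finite_full proj] supported_lift])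
  have L_compl: "lift \<Sigma> qs Qperp = opsub (Id_full \<Sigma>) ?L"
    by (simp add: lift_opsub lift_ident)
  have "?M ?L (lift \<Sigma> qs Qperp) = opzero" "?M (lift \<Sigma> qs Qperp) ?L = opzero"
    "?M (lift \<Sigma> qs Qperp) (lift \<Sigma> qs Qperp) = lift \<Sigma> qs Qperp"
    unfolding L_compl
    by (simp_all add: mmult_opsub_left mmult_opsub_right LL finite_full supported_lift
        supported_ident mmult_ident_left_supported mmult_ident_right_supported fun_eq_iff)
  then show ?thesis
    by (simp add: Qmix_def mmult_opadd_left mmult_opadd_right mmult_opscale_left mmult_opscale_right LL)
      (simp add: fun_eq_iff)
qed

lemma sandw_Q_Qmix: "sandw \<Sigma> qs Q (Qmix a b) = Qmix a 0"
  by (simp add: sandw_orth_proj[OF finite_full proj] lift_Q_Qmix mmult_Qmix)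

lemma sandw_Qperp_Qmix: "sandw \<Sigma> qs Qperp (Qmix a b) = Qmix 0 b"
  by (simp add: sandw_orth_proj[OF finite_full orth_proj_Qperp] lift_Qperp_Qmix mmult_Qmix)

lemma B0_Qperp_Qmix: "B0 \<Sigma> qs Qperp (Qmix a b) = Qmix a 0"
  by (simp add: B0_def compl_Qperp sandw_Q_Qmix)

lemma B1_Qperp_Qmix: "B1 \<Sigma> qs Qperp (Qmix a b) = Qmix 0 b"
  by (simp add: B1_def sandw_Qperp_Qmix)

lemma psd_Qmix: "0 \<le> a \<Longrightarrow> 0 \<le> b \<Longrightarrow> psd (full \<Sigma>) (Qmix a b)"
  unfolding Qmix_def
  by (intro psd_opadd psd_opscale orth_proj_psd orth_proj_lift finite_full proj orth_proj_Qperp)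

lemma loewner_Qmix: "a \<le> c \<Longrightarrow> b \<le> d \<Longrightarrow> loewner (full \<Sigma>) (Qmix a b) (Qmix c d)"
  by (simp add: loewner_def opsub_Qmix psd_Qmix)

lemma predicate_Qmix: "0 \<le> a \<Longrightarrow> a \<le> 1 \<Longrightarrow> 0 \<le> b \<Longrightarrow> b \<le> 1 \<Longrightarrow> predicate \<Sigma> (Qmix a b)"
  by (simp add: predicate_def opzero_Qmix Id_full_Qmix loewner_Qmix)

lemma psd_Q: "psd (bas \<Sigma> qs) Q"
  and psd_Qperp: "psd (bas \<Sigma> qs) Qperp"
  by (intro orth_proj_psd proj orth_proj_Qperp)+

lemma loewner_zero_Qperp: "loewner (bas \<Sigma> qs) opzero Qperp"
  and loewner_Qperp_ident: "loewner (bas \<Sigma> qs) Qperp (ident (bas \<Sigma> qs))"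
  by (simp_all add: loewner_def compl_Qperp psd_Q psd_Qperp)

lemma ref_tot_boost_hole:
  assumes "0 \<le> \<epsilon>" "\<epsilon> \<le> 1" "F \<noteq> {}"
    and spec: "\<And>s. s \<in> F \<Longrightarrow> \<exists>a b. s = (Qmix 0 a, Qmix 1 b) \<and> 0 \<le> b \<and> b \<le> 1 \<and> a \<le> (1 - b) * \<epsilon> + b"
  shows "ref_tot \<Sigma> (Hole F) (boost_hole \<epsilon>)"
proof -
  define P' where "P' g = (if g = 0 then Qmix 0 \<epsilon> else Qmix 0 1)" for g :: nat
  define Q' where "Q' g = (if g = 0 then Qmix 1 0 else Qmix 1 1)" for g :: nat
  have "ref_tot \<Sigma> (Hole F) (Hole ((\<lambda>g. (P' g, Q' g)) ` {0, 1}))"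
  proof (rule ref_tot_splitI)
    show "predicate \<Sigma> (P' g) \<and> predicate \<Sigma> (Q' g)" for g
      using assms(1,2) by (simp add: P'_def Q'_def predicate_Qmix)
    fix s assume "s \<in> F"
    then obtain a b where s: "s = (Qmix 0 a, Qmix 1 b)" "0 \<le> b" "b \<le> 1" "a \<le> (1 - b) * \<epsilon> + b"
      using spec by blast
    show "\<exists>p. (\<forall>g\<in>{0, 1}. 0 \<le> p g) \<and>
        loewner (full \<Sigma>) (fst s) (opsum {0, 1} (\<lambda>g. opscale (complex_of_real (p g)) (P' g))) \<and>
        loewner (full \<Sigma>) (opsum {0, 1} (\<lambda>g. opscale (complex_of_real (p g)) (Q' g))) (snd s)"
      using s
      by (intro exI[of _ "\<lambda>g. if g = 0 then 1 - b else b"])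
        (simp add: opsum_pair P'_def Q'_def opscale_Qmix opadd_Qmix loewner_Qmix loewner_refl del: of_real_diff)
  qed (use \<open>F \<noteq> {}\<close> in simp_all)
  then show ?thesis
    by (simp add: P'_def Q'_def lift_Q_Qmix lift_Qperp_Qmix Id_full_Qmix opscale_Qmix insert_commute)
qed

lemma ref_tot_star_IfThen_Qperp:
  assumes spec: "\<And>s. s \<in> F \<Longrightarrow> \<exists>a b. s = (Qmix 1 a, Qmix 1 b) \<and> 0 \<le> a \<and> a \<le> 1 \<and> 0 \<le> b \<and> b \<le> 1"
  shows "ref_tot_star \<Sigma> (Hole F) (IfThen \<Sigma> qs Qperp (Hole ((\<lambda>s. (sandw \<Sigma> qs Qperp (fst s), snd s)) ` F)))"
proof -
  have "ref_tot \<Sigma> (Hole F) (IfThenElse \<Sigma> qs Qperp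
      (Hole ((\<lambda>s. (sandw \<Sigma> qs Qperp (fst s), snd s)) ` F)) (Hole ((\<lambda>s. (snd s, snd s)) ` F)))"
  proof (rule ref_tot_IfThenElseI)
    fix s assume "s \<in> F"
    then obtain a b where "s = (Qmix 1 a, Qmix 1 b)" "0 \<le> a" "a \<le> 1" "0 \<le> b" "b \<le> 1"
      using spec by blast
    then show "predicate \<Sigma> (sandw \<Sigma> qs Qperp (fst s)) \<and> predicate \<Sigma> (snd s) \<and>
        loewner (full \<Sigma>) (fst s)
          (opadd (sandw \<Sigma> qs Qperp (sandw \<Sigma> qs Qperp (fst s))) (sandw \<Sigma> qs (opsub (ident (bas \<Sigma> qs)) Qperp) (snd s)))"
      by (simp add: sandw_Qperp_Qmix compl_Qperp sandw_Q_Qmix opadd_Qmix predicate_Qmix loewner_refl)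
  qed (simp_all add: psd_Qperp compl_Qperp psd_Q)
  moreover have "ref_tot \<Sigma> (Hole ((\<lambda>s. (snd s, snd s)) ` F)) Skip"
    by (rule ref_tot_skipI) (auto simp: loewner_refl)
  ultimately show ?thesis
    unfolding IfThen_def ref_tot_star_def
    by (meson ref_tot_IfThenElse_else rtranclp.rtrancl_into_rtrancl rtranclp.rtrancl_refl)
qed

lemma boost_while:
  assumes "0 < \<epsilon>" "\<epsilon> < 1"
  shows "ref_tot_star \<Sigma> (Hole {(Id_full \<Sigma>, lift \<Sigma> qs Q)}) (While qs Qperp (boost_hole \<epsilon>))"
proof -
  define r where "r n = 1 - (1 - \<epsilon>) ^ n" for n
  have r_bounds: "0 \<le> r n \<and> r n \<le> 1" for n
    using assms by (simp add: r_def power_le_one)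
  have r_Suc: "r (Suc n) = (1 - r n) * \<epsilon> + r n" for n
    by (simp add: r_def algebra_simps)
  have r_mono: "r n \<le> r (Suc n)" for n
    using r_Suc[of n] r_bounds[of n] assms by simp
  have "(\<lambda>n. (1 - \<epsilon>) ^ n) \<longlonglongrightarrow> 0"
    using assms by (intro LIMSEQ_power_zero) simp
  then have r_lim: "r \<longlonglongrightarrow> 1"
    unfolding r_def[abs_def] by (auto intro: tendsto_eq_intros)
  have R_lim: "(\<lambda>n. Qmix 0 (r n) x y) \<longlonglongrightarrow> Qmix 0 1 x y" for x y
    unfolding Qmix_apply by (auto intro!: tendsto_eq_intros r_lim)
  define R where "R s n = Qmix 0 (r n)" for s :: "('v,'a) spec" and n
  define F where "F = range (\<lambda>n. (Qmix 0 (r (Suc n)), Qmix 1 (r n)))"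
  have "ref_tot \<Sigma> (Hole {(Id_full \<Sigma>, lift \<Sigma> qs Q)}) (While qs Qperp (Hole
      {(R s (Suc n), opadd (B0 \<Sigma> qs Qperp (snd s)) (B1 \<Sigma> qs Qperp (R s n))) | s n. s \<in> {(Id_full \<Sigma>, lift \<Sigma> qs Q)}}))"
    by (rule ref_tot_whileI[where Rlim = "\<lambda>_. Qmix 0 1", OF loewner_zero_Qperp loewner_Qperp_ident])
      (use r_bounds r_mono R_lim in \<open>auto simp: R_def r_def[of 0] opzero_Qmix lift_Q_Qmix Id_full_Qmix
        B0_Qperp_Qmix B1_Qperp_Qmix opadd_Qmix predicate_Qmix loewner_Qmix loewner_refl\<close>)
  also have "{(R s (Suc n), opadd (B0 \<Sigma> qs Qperp (snd s)) (B1 \<Sigma> qs Qperp (R s n))) | s n.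
      s \<in> {(Id_full \<Sigma>, lift \<Sigma> qs Q)}} = F"
    by (auto simp: R_def F_def lift_Q_Qmix B0_Qperp_Qmix B1_Qperp_Qmix opadd_Qmix)
  finally have loop: "ref_tot \<Sigma> (Hole {(Id_full \<Sigma>, lift \<Sigma> qs Q)}) (While qs Qperp (Hole F))" .
  have "ref_tot \<Sigma> (Hole F) (boost_hole \<epsilon>)"
    using assms r_bounds r_Suc by (intro ref_tot_boost_hole) (auto simp: F_def)
  with loop show ?thesis
    unfolding ref_tot_star_def by (meson ref_tot.while rtranclp.rtrancl_into_rtrancl rtranclp.rtrancl_refl)
qed

text \<open>The \<open>j\<close>-th iteration is entered with the precondition \<open>Q + c\<^sub>j Q\<^sup>\<bottom>\<close>, where
  \<open>c\<^sub>j = 1 - (1 - \<epsilon>)\<^sup>N\<^sup>-\<^sup>j\<close> is the success probability of the remaining \<open>N - j\<close> iterations; the choice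
  of \<open>N\<close> makes \<open>c\<^sub>0 \<ge> p\<close>.  The trivial specification \<open>(I, I)\<close> is carried along with constant \<open>c\<^sub>j = 1\<close>.\<close>

lemma boost_repeat:
  assumes "0 < p" "p < 1" "0 < \<epsilon>" "\<epsilon> < p"
  shows "ref_tot_star \<Sigma> (Hole {(opscale (complex_of_real p) (Id_full \<Sigma>), lift \<Sigma> qs Q), (Id_full \<Sigma>, Id_full \<Sigma>)})
    (Repeat (nat \<lceil>log (1 - \<epsilon>) (1 - p)\<rceil>) (IfThen \<Sigma> qs Qperp (boost_hole \<epsilon>)))"
proof -
  define N where "N = nat \<lceil>log (1 - \<epsilon>) (1 - p)\<rceil>"
  have pow_N: "(1 - \<epsilon>) ^ N \<le> 1 - p"
    unfolding N_def using assms by (intro pow_nat_ceiling_log_le) auto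
  then have "N \<noteq> 0"
    using assms by (intro notI) simp
  define F0 where "F0 = {(opscale (complex_of_real p) (Id_full \<Sigma>), lift \<Sigma> qs Q), (Id_full \<Sigma>, Id_full \<Sigma>)}"
  define c where "c s j = (if s = (Id_full \<Sigma>, Id_full \<Sigma>) then 1 else 1 - (1 - \<epsilon>) ^ (N - j))" for s j
  have c_bounds: "0 \<le> c s j \<and> c s j \<le> 1" for s j
    using assms by (simp add: c_def power_le_one)
  have c_step: "c s j \<le> (1 - c s (Suc j)) * \<epsilon> + c s (Suc j)" if "j < N" for s j
  proof -
    have "N - j = Suc (N - Suc j)" using that by simp
    then show ?thesis by (simp add: c_def algebra_simps)
  qed
  define F1 where "F1 = {(Qmix 1 (c s j), Qmix 1 (c s (Suc j))) | s j. s \<in> F0 \<and> j < N}"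
  have repeat: "ref_tot \<Sigma> (Hole F0) (Repeat N (Hole F1))"
    unfolding F1_def
  proof (rule ref_tot_repeatI)
    fix s assume s: "s \<in> F0"
    have "loewner (full \<Sigma>) (fst s) (Qmix 1 (c s 0)) \<and> loewner (full \<Sigma>) (Qmix 1 (c s N)) (snd s)"
    proof (cases "s = (Id_full \<Sigma>, Id_full \<Sigma>)")
      case True
      then show ?thesis by (simp add: c_def Id_full_Qmix loewner_refl)
    next
      case False
      then have "s = (opscale (complex_of_real p) (Id_full \<Sigma>), lift \<Sigma> qs Q)" using s by (simp add: F0_def)
      with False pow_N assms show ?thesis
        by (simp add: c_def Id_full_Qmix lift_Q_Qmix opscale_Qmix loewner_Qmix)
    qed
    then show "(\<forall>j\<le>N. predicate \<Sigma> (Qmix 1 (c s j))) \<and>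
        loewner (full \<Sigma>) (fst s) (Qmix 1 (c s 0)) \<and> loewner (full \<Sigma>) (Qmix 1 (c s N)) (snd s)"
      using c_bounds by (simp add: predicate_Qmix)
  qed
  have branch: "ref_tot_star \<Sigma> (Repeat N (Hole F1))
      (Repeat N (IfThen \<Sigma> qs Qperp (Hole ((\<lambda>s. (sandw \<Sigma> qs Qperp (fst s), snd s)) ` F1))))"
  proof (intro ref_tot_star_lift[OF ref_tot.repeat] ref_tot_star_IfThen_Qperp)
    fix s assume "s \<in> F1"
    then obtain s0 j where "s = (Qmix 1 (c s0 j), Qmix 1 (c s0 (Suc j)))" unfolding F1_def by blast
    with c_bounds show "\<exists>a b. s = (Qmix 1 a, Qmix 1 b) \<and> 0 \<le> a \<and> a \<le> 1 \<and> 0 \<le> b \<and> b \<le> 1"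
      by blast
  qed
  have split: "ref_tot \<Sigma> (Hole ((\<lambda>s. (sandw \<Sigma> qs Qperp (fst s), snd s)) ` F1)) (boost_hole \<epsilon>)"
  proof (rule ref_tot_boost_hole)
    show "(\<lambda>s. (sandw \<Sigma> qs Qperp (fst s), snd s)) ` F1 \<noteq> {}"
      using \<open>N \<noteq> 0\<close> by (auto simp: F1_def F0_def)
  next
    fix s assume "s \<in> (\<lambda>s. (sandw \<Sigma> qs Qperp (fst s), snd s)) ` F1"
    then obtain s0 j where "j < N" "s = (Qmix 0 (c s0 j), Qmix 1 (c s0 (Suc j)))"
      unfolding F1_def by (auto simp: sandw_Qperp_Qmix)
    with c_bounds c_step show "\<exists>a b. s = (Qmix 0 a, Qmix 1 b) \<and> 0 \<le> b \<and> b \<le> 1 \<and> a \<le> (1 - b) * \<epsilon> + b"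
      by blast
  qed (use assms in auto)
  have "ref_tot \<Sigma> (Repeat N (IfThen \<Sigma> qs Qperp (Hole ((\<lambda>s. (sandw \<Sigma> qs Qperp (fst s), snd s)) ` F1))))
      (Repeat N (IfThen \<Sigma> qs Qperp (boost_hole \<epsilon>)))"
    unfolding IfThen_def by (intro ref_tot.repeat ref_tot_IfThenElse_then split)
  with repeat branch show ?thesis
    unfolding N_def[symmetric] F0_def[symmetric] ref_tot_star_def
    by (meson converse_rtranclp_into_rtranclp rtranclp.rtrancl_into_rtrancl)
qed

end

theorem mainTheorem6:
  fixes \<Sigma> :: "'v::finite \<Rightarrow> 'a::zero set"
    and qs :: "'v set"
    and Q :: "('v,'a) op"
  assumes wf: "wf_alph \<Sigma>"
    and proj: "orth_proj (bas \<Sigma> qs) Q"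
  defines "Qperp \<equiv> opsub (ident (bas \<Sigma> qs)) Q"
  shows
    "(\<forall>(p::real) (\<epsilon>::real). 0 < p \<and> p < 1 \<and> 0 < \<epsilon> \<and> \<epsilon> < p \<longrightarrow>
       ref_tot_star \<Sigma>
         (Hole {(opscale (complex_of_real p) (Id_full \<Sigma>), lift \<Sigma> qs Q), (Id_full \<Sigma>, Id_full \<Sigma>)})
         (Repeat (nat \<lceil>log (1 - \<epsilon>) (1 - p)\<rceil>)
            (IfThen \<Sigma> qs Qperp
               (Hole {(opscale (complex_of_real \<epsilon>) (lift \<Sigma> qs Qperp), lift \<Sigma> qs Q),
                      (lift \<Sigma> qs Qperp, Id_full \<Sigma>)}))))
   \<and> (\<forall>(\<epsilon>::real). 0 < \<epsilon> \<and> \<epsilon> < 1 \<longrightarrow>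
       ref_tot_star \<Sigma>
         (Hole {(Id_full \<Sigma>, lift \<Sigma> qs Q)})
         (While qs Qperp
            (Hole {(opscale (complex_of_real \<epsilon>) (lift \<Sigma> qs Qperp), lift \<Sigma> qs Q),
                   (lift \<Sigma> qs Qperp, Id_full \<Sigma>)})))"
proof -
  interpret boost_setting \<Sigma> qs Q
    using wf proj by unfold_locales
  show ?thesis
    unfolding Qperp_def using boost_repeat boost_while by blast
qed

end
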